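(* Let $g$ be a non-constant entire function of finite order $\rho\ge0$ whose Taylor coefficients are all non-negative. Then $f=e^g$ is Gaussian.
   Context: Such $f=\sum_n a_nz^n$ is entire, with $a_n\ge0$ and $a_0>0$. For $t>0$, $X_t$ is the random variable with $\mathbf{P}(X_t=n)=a_nt^n/f(t)$, $n\ge0$. With $m_f(t)=\mathbf{E}(X_t)$, $\sigma_f^2(t)=\mathbf{V}(X_t)>0$ and $\breve{X}_t=(X_t-m_f(t))/\sigma_f(t)$, $f$ is called Gaussian if $\breve{X}_t$ converges in distribution to a standard normal random variable as $t\to+\infty$. The order of an entire function $g$ is $\limsup_{r\to\infty}\frac{\ln\ln\max_{|z|=r}|g(z)|}{\ln r}$. *)

theory Defs
  imports "HOL-Complex_Analysis.Complex_Analysis" "HOL-Probability.Probability"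
begin

definition taylor_coeff :: "(complex \<Rightarrow> complex) \<Rightarrow> nat \<Rightarrow> complex" where
  "taylor_coeff h n = (deriv ^^ n) h 0 / of_nat (fact n)"

definition max_modulus :: "(complex \<Rightarrow> complex) \<Rightarrow> real \<Rightarrow> real" where
  "max_modulus h r = (SUP z\<in>{z. norm z = r}. norm (h z))"

definition entire_order :: "(complex \<Rightarrow> complex) \<Rightarrow> ereal" where
  "entire_order h = Limsup at_top (\<lambda>r. ereal (ln (ln (max_modulus h r)) / ln r))"

text \<open>For a power series with coefficients a (a n \<ge> 0, a 0 > 0) and t > 0, X_t is the
  random variable on the naturals with P(X_t = n) = a n t^n / f t.\<close>
definition ps_val :: "(nat \<Rightarrow> real) \<Rightarrow> real \<Rightarrow> real" where
  "ps_val a t = (\<Sum>n. a n * t ^ n)"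

definition ps_mean :: "(nat \<Rightarrow> real) \<Rightarrow> real \<Rightarrow> real" where
  "ps_mean a t = (\<Sum>n. real n * a n * t ^ n) / ps_val a t"

definition ps_sigma :: "(nat \<Rightarrow> real) \<Rightarrow> real \<Rightarrow> real" where
  "ps_sigma a t = sqrt ((\<Sum>n. (real n - ps_mean a t)\<^sup>2 * a n * t ^ n) / ps_val a t)"

definition ps_normalized_cdf :: "(nat \<Rightarrow> real) \<Rightarrow> real \<Rightarrow> real \<Rightarrow> real" where
  "ps_normalized_cdf a t x =
     (\<Sum>n. if (real n - ps_mean a t) / ps_sigma a t \<le> x then a n * t ^ n else 0) / ps_val a t"

definition std_normal_cdf :: "real \<Rightarrow> real" where
  "std_normal_cdf x = measure (density lborel std_normal_density) {..x}"

text \<open>Gaussian: the normalised variable converges in distribution to N(0,1) as t \<rightarrow> \<infinity>;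
  since the limit CDF is continuous, this is pointwise convergence of the CDFs.\<close>
definition gaussian :: "(nat \<Rightarrow> real) \<Rightarrow> bool" where
  "gaussian a \<longleftrightarrow> (\<forall>x. ((\<lambda>t. ps_normalized_cdf a t x) \<longlongrightarrow> std_normal_cdf x) at_top)"

end

(*
  For f = exp g with g(z) = \<Sum> b_k z^k and b_k \<ge> 0, the variable X_t satisfies
  log E e^(s X_t) = g(t e^s) - g(t), so its cumulants are \<kappa>_j(t) = \<Sum> k^j b_k t^k. Hence, with
  \<sigma> = \<kappa>_2^(1/2) and u = \<theta>/\<sigma>, the characteristic function of (X_t - \<kappa>_1)/\<sigma> is
  exp (\<Sum> b_k t^k (e^(iku) - 1 - iku)) = exp (R(t) - \<theta>^2/2),
  where R collects the remainders of the quadratic Taylor polynomial of e^(iku).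
  Cutting R at K = \<kappa>_2^(1/4), the terms with k \<le> K contribute at most |\<theta>|^3 K/(6 \<sigma>), which is
  O(\<kappa>_2^(-1/4)), and the others at most \<theta>^2 T/\<kappa>_2, where T is the tail of the series of
  \<kappa>_2 beyond K. For polynomial g the tail is eventually empty. Otherwise \<kappa>_2 outgrows every
  power of t, so K \<ge> t^(\<rho>+2) - 1, while k^2 \<le> 4^k and finite order give
  T \<le> 2^(1-K) g(16t) \<le> 2^(1-K) exp((16t)^(\<rho>+1)), which tends to 0.
  Levy's continuity theorem turns this into convergence of the distribution functions.
*)
theory Submission
  imports Defs "HOL-Real_Asymp.Real_Asymp"
begin

section \<open>Power series distributions\<close>

definition discrete_distr :: "(nat \<Rightarrow> real) \<Rightarrow> (nat \<Rightarrow> real) \<Rightarrow> real measure" where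
  "discrete_distr w \<phi> = distr (density (count_space UNIV) (\<lambda>n. ennreal (w n))) borel \<phi>"

lemma prob_space_density_count_space_nat:
  assumes "\<And>n. w n \<ge> 0" and "w sums 1"
  shows "prob_space (density (count_space UNIV) (\<lambda>n. ennreal (w n)))"
proof (rule prob_spaceI)
  have "summable w" using assms(2) by (simp add: sums_iff)
  then show "emeasure (density (count_space UNIV) (\<lambda>n. ennreal (w n)))
      (space (density (count_space UNIV) (\<lambda>n. ennreal (w n)))) = 1"
    using assms by (simp add: emeasure_density nn_integral_count_space_nat suminf_ennreal2
        sums_unique[symmetric])
qed

lemma integral_density_count_space_nat:
  fixes h :: "nat \<Rightarrow> 'a::{banach, second_countable_topology}"
  assumes w: "\<And>n. w n \<ge> 0" "summable w" and h: "\<And>n. norm (h n) \<le> 1"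
  shows "integral\<^sup>L (density (count_space UNIV) (\<lambda>n. ennreal (w n))) h = (\<Sum>n. w n *\<^sub>R h n)"
proof -
  have "summable (\<lambda>n. norm (w n *\<^sub>R h n))"
    by (rule summable_comparison_test[OF _ w(2)])
       (use w h in \<open>auto intro!: mult_left_le\<close>)
  then show ?thesis
    using w by (simp add: integral_density integral_count_space_nat integrable_count_space_nat_iff)
qed

lemma real_distribution_discrete_distr:
  assumes "\<And>n. w n \<ge> 0" and "w sums 1"
  shows "real_distribution (discrete_distr w \<phi>)"
proof -
  interpret prob_space "density (count_space UNIV) (\<lambda>n. ennreal (w n))"
    by (rule prob_space_density_count_space_nat[OF assms])
  have "prob_space (discrete_distr w \<phi>)"
    unfolding discrete_distr_def by (rule prob_space_distr) simp
  then show ?thesis by (simp add: real_distribution_def real_distribution_axioms_def discrete_distr_def)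
qed

lemma char_discrete_distr:
  assumes "\<And>n. w n \<ge> 0" and "w sums 1"
  shows "char (discrete_distr w \<phi>) \<theta> = (\<Sum>n. of_real (w n) * iexp (\<theta> * \<phi> n))"
  using assms unfolding char_def discrete_distr_def
  by (subst integral_distr) (auto simp: sums_iff integral_density_count_space_nat scaleR_conv_of_real)

lemma cdf_discrete_distr:
  assumes w: "\<And>n. w n \<ge> 0" and "w sums 1"
  shows "cdf (discrete_distr w \<phi>) x = (\<Sum>n. if \<phi> n \<le> x then w n else 0)"
proof -
  have sw: "summable w" using assms(2) by (simp add: sums_iff)
  have "cdf (discrete_distr w \<phi>) x
      = integral\<^sup>L (density (count_space UNIV) (\<lambda>n. ennreal (w n))) (indicator (\<phi> -` {..x}))"
    unfolding cdf_def discrete_distr_def by (subst measure_distr) auto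
  also have "\<dots> = (\<Sum>n. w n * indicator (\<phi> -` {..x}) n)"
    using w sw by (subst integral_density_count_space_nat) (auto simp: indicator_def)
  also have "\<dots> = (\<Sum>n. if \<phi> n \<le> x then w n else 0)"
    by (intro suminf_cong) (simp add: indicator_def)
  finally show ?thesis .
qed

lemma isCont_std_normal_cdf: "isCont (cdf std_normal_distribution) x"
proof -
  interpret real_distribution std_normal_distribution by (rule real_dist_normal_dist)
  have "emeasure std_normal_distribution {x} = 0"
    by (subst emeasure_density) auto
  then show ?thesis by (simp add: isCont_cdf measure_def)
qed

definition ps_normalized_distr :: "(nat \<Rightarrow> real) \<Rightarrow> real \<Rightarrow> real measure" where
  "ps_normalized_distr a t =
     discrete_distr (\<lambda>n. a n * t ^ n / ps_val a t) (\<lambda>n. (real n - ps_mean a t) / ps_sigma a t)"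

lemma
  assumes a: "\<And>n. a n \<ge> 0" and summable: "summable (\<lambda>n. a n * t ^ n)"
    and t: "t > 0" and val: "ps_val a t > 0"
  shows real_distribution_ps_normalized_distr: "real_distribution (ps_normalized_distr a t)"
    and cdf_ps_normalized_distr: "cdf (ps_normalized_distr a t) x = ps_normalized_cdf a t x"
proof -
  have w: "a n * t ^ n / ps_val a t \<ge> 0" for n
    using a[of n] t val by simp
  have ws: "(\<lambda>n. a n * t ^ n / ps_val a t) sums 1"
    using sums_divide[OF summable_sums[OF summable], of "ps_val a t"] val
    by (simp add: ps_val_def)
  show "real_distribution (ps_normalized_distr a t)"
    unfolding ps_normalized_distr_def by (rule real_distribution_discrete_distr[OF w ws])
  have "summable (\<lambda>n. if (real n - ps_mean a t) / ps_sigma a t \<le> x then a n * t ^ n else 0)"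
    by (rule summable_comparison_test[OF _ summable]) (use a t in auto)
  then show "cdf (ps_normalized_distr a t) x = ps_normalized_cdf a t x"
    unfolding ps_normalized_distr_def ps_normalized_cdf_def cdf_discrete_distr[OF w ws]
    by (subst suminf_divide[symmetric]) (auto intro: suminf_cong)
qed

lemma gaussianI_char:
  assumes a: "\<And>n. a n \<ge> 0" and summable: "\<And>t. t > 0 \<Longrightarrow> summable (\<lambda>n. a n * t ^ n)"
    and val: "\<And>t. t > 0 \<Longrightarrow> ps_val a t > 0"
    and char: "\<And>\<theta>. ((\<lambda>t. char (ps_normalized_distr a t) \<theta>) \<longlongrightarrow> char std_normal_distribution \<theta>) at_top"
  shows "gaussian a"
  unfolding gaussian_def
proof
  fix x
  show "((\<lambda>t. ps_normalized_cdf a t x) \<longlongrightarrow> std_normal_cdf x) at_top"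
  proof (rule tendsto_at_topI_sequentially)
    fix X :: "nat \<Rightarrow> real"
    assume X: "filterlim X at_top sequentially"
    define Y where "Y n = max (X n) 1" for n
    have Y: "filterlim Y at_top sequentially"
      unfolding Y_def by (rule filterlim_at_top_mono[OF X]) auto
    have Y_pos: "Y n > 0" for n
      unfolding Y_def by simp
    have "weak_conv_m (\<lambda>n. ps_normalized_distr a (Y n)) std_normal_distribution"
      by (rule levy_continuity[OF real_distribution_ps_normalized_distr real_dist_normal_dist
            filterlim_compose[OF char Y]]) (use a summable val Y_pos in auto)
    then have "(\<lambda>n. cdf (ps_normalized_distr a (Y n)) x) \<longlonglongrightarrow> std_normal_cdf x"
      using isCont_std_normal_cdf by (simp add: weak_conv_m_def weak_conv_def std_normal_cdf_def cdf_def)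
    moreover have "\<forall>\<^sub>F n in sequentially. cdf (ps_normalized_distr a (Y n)) x = ps_normalized_cdf a (X n) x"
      using filterlim_at_top[THEN iffD1, OF X, rule_format, of 1]
      by eventually_elim (use a summable val Y_pos in \<open>simp add: Y_def cdf_ps_normalized_distr\<close>)
    ultimately show "(\<lambda>n. ps_normalized_cdf a (X n) x) \<longlonglongrightarrow> std_normal_cdf x"
      by (rule Lim_transform_eventually)
  qed
qed

section \<open>Entire functions with nonnegative Taylor coefficients\<close>

lemma taylor_coeff_sums:
  assumes "h holomorphic_on UNIV"
  shows "(\<lambda>n. taylor_coeff h n * z ^ n) sums h z"
  using holomorphic_power_series[where r = "norm z + 1" and z = 0 and w = z]
    holomorphic_on_subset[OF assms]
  by (simp add: taylor_coeff_def)

lemma taylor_coeff_nonzero_if_nonconstant: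
  assumes "h holomorphic_on UNIV" and "\<not> (\<exists>c. \<forall>z. h z = c)"
  obtains n where "n > 0" and "taylor_coeff h n \<noteq> 0"
proof (rule ccontr)
  assume "\<not> thesis"
  with that have "taylor_coeff h n = 0" if "n > 0" for n
    using \<open>n > 0\<close> by blast
  then have "(\<lambda>n. taylor_coeff h n * z ^ n) = (\<lambda>n. if n = 0 then taylor_coeff h 0 else 0)" for z
    by auto
  then have "(\<lambda>n. taylor_coeff h n * z ^ n) sums taylor_coeff h 0" for z
    using sums_single[of 0 "\<lambda>_. taylor_coeff h 0"] by simp
  then have "h z = taylor_coeff h 0" for z
    by (rule sums_unique2[OF taylor_coeff_sums[OF assms(1)]])
  with assms(2) show False by blast
qed

lemma taylor_coeff_sums_Re:
  assumes "h holomorphic_on UNIV" and "\<And>n. taylor_coeff h n \<in> \<real>\<^sub>\<ge>\<^sub>0"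
  shows "(\<lambda>n. of_real (Re (taylor_coeff h n)) * z ^ n) sums h z"
  using taylor_coeff_sums[OF assms(1)] assms(2) by (simp add: nonneg_Reals_Real)

lemma taylor_coeff_pos_if_nonconstant:
  assumes "h holomorphic_on UNIV" and "\<And>n. taylor_coeff h n \<in> \<real>\<^sub>\<ge>\<^sub>0"
    and "\<not> (\<exists>c. \<forall>z. h z = c)"
  obtains k where "k > 0" and "Re (taylor_coeff h k) > 0"
proof -
  obtain k where "k > 0" and "taylor_coeff h k \<noteq> 0"
    using taylor_coeff_nonzero_if_nonconstant[OF assms(1,3)] .
  moreover have "Im (taylor_coeff h k) = 0" and "Re (taylor_coeff h k) \<ge> 0"
    using assms(2)[of k] by (simp_all add: complex_nonneg_Reals_iff)
  ultimately show thesis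
    using that[of k] by (auto simp: complex_eq_iff)
qed

lemma deriv_exp_comp:
  assumes "g holomorphic_on UNIV"
  shows "deriv (\<lambda>z. exp (g z)) = (\<lambda>z. deriv g z * exp (g z))"
proof
  fix z
  have "(g has_field_derivative deriv g z) (at z)"
    using assms by (auto intro!: holomorphic_derivI)
  then show "deriv (\<lambda>z. exp (g z)) z = deriv g z * exp (g z)"
    by (intro DERIV_imp_deriv) (auto intro!: derivative_eq_intros)
qed

lemma sum_nonneg_Reals: "(\<And>i. i \<in> A \<Longrightarrow> f i \<in> \<real>\<^sub>\<ge>\<^sub>0) \<Longrightarrow> sum f A \<in> \<real>\<^sub>\<ge>\<^sub>0"
  by (induction A rule: infinite_finite_induct) auto

lemma higher_deriv_exp_nonneg_Reals:
  assumes hol: "g holomorphic_on UNIV" and nonneg: "\<And>n. (deriv ^^ n) g 0 \<in> \<real>\<^sub>\<ge>\<^sub>0"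
  shows "(deriv ^^ n) (\<lambda>z. exp (g z)) 0 \<in> \<real>\<^sub>\<ge>\<^sub>0"
proof (induction n rule: less_induct)
  case (less n)
  show ?case
  proof (cases n)
    case 0
    then show ?thesis
      using nonneg[of 0] by (auto elim!: nonneg_Reals_cases simp: exp_of_real)
  next
    case (Suc m)
    have "(deriv ^^ n) (\<lambda>z. exp (g z)) 0 = (deriv ^^ m) (\<lambda>z. deriv g z * exp (g z)) 0"
      by (simp add: Suc funpow_Suc_right deriv_exp_comp[OF hol] del: funpow.simps)
    also have "\<dots> = (\<Sum>i = 0..m. of_nat (m choose i) * (deriv ^^ i) (deriv g) 0
        * (deriv ^^ (m - i)) (\<lambda>z. exp (g z)) 0)"
      by (rule higher_deriv_mult[OF holomorphic_deriv[OF hol open_UNIV] _ open_UNIV])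
        (auto intro!: holomorphic_intros hol)
    also have "\<dots> = (\<Sum>i = 0..m. of_nat (m choose i) * (deriv ^^ Suc i) g 0
        * (deriv ^^ (m - i)) (\<lambda>z. exp (g z)) 0)"
      by (simp add: funpow_Suc_right del: funpow.simps)
    also have "\<dots> \<in> \<real>\<^sub>\<ge>\<^sub>0"
      using less Suc nonneg
      by (intro sum_nonneg_Reals nonneg_Reals_mult_I nonneg_Reals_of_nat_I) (auto simp del: funpow.simps)
    finally show ?thesis .
  qed
qed

lemma taylor_coeff_nonneg_Reals_iff:
  "taylor_coeff h n \<in> \<real>\<^sub>\<ge>\<^sub>0 \<longleftrightarrow> (deriv ^^ n) h 0 \<in> \<real>\<^sub>\<ge>\<^sub>0"
  by (simp add: taylor_coeff_def complex_nonneg_Reals_iff zero_le_divide_iff del: of_nat_fact)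

lemma taylor_coeff_exp_nonneg_Reals:
  assumes "g holomorphic_on UNIV" and "\<And>n. taylor_coeff g n \<in> \<real>\<^sub>\<ge>\<^sub>0"
  shows "taylor_coeff (\<lambda>z. exp (g z)) n \<in> \<real>\<^sub>\<ge>\<^sub>0"
  using higher_deriv_exp_nonneg_Reals[OF assms(1)] assms(2)
  by (simp add: taylor_coeff_nonneg_Reals_iff)

lemma norm_le_max_modulus:
  assumes "continuous_on (sphere 0 r) h" and "norm z = r"
  shows "norm (h z) \<le> max_modulus h r"
proof -
  have "compact ((\<lambda>z. norm (h z)) ` sphere 0 r)"
    by (intro compact_continuous_image continuous_on_norm assms(1) compact_sphere)
  then have "bdd_above ((\<lambda>z. norm (h z)) ` {z. norm z = r})"
    by (intro bounded_imp_bdd_above compact_imp_bounded) (simp add: sphere_def)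
  then show ?thesis
    unfolding max_modulus_def by (rule cSUP_upper[rotated]) (use assms(2) in simp)
qed

lemma eventually_ln_max_modulus_le:
  assumes "entire_order h < ereal \<sigma>"
  shows "\<forall>\<^sub>F r in at_top. ln (max_modulus h r) \<le> r powr \<sigma>"
proof -
  have "\<forall>\<^sub>F r in at_top. ereal (ln (ln (max_modulus h r)) / ln r) < ereal \<sigma>"
    using assms unfolding entire_order_def by (rule Limsup_lessD)
  then show ?thesis
    using eventually_gt_at_top[of 1]
  proof eventually_elim
    case (elim r)
    show ?case
    proof (cases "ln (max_modulus h r) > 0")
      case True
      have "ln (ln (max_modulus h r)) < \<sigma> * ln r"
        using elim by (simp add: field_simps)
      then have "exp (ln (ln (max_modulus h r))) < exp (\<sigma> * ln r)"
        by simp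
      with True elim show ?thesis
        by (simp add: powr_def mult.commute)
    qed (simp add: order_trans[OF _ powr_ge_zero])
  qed
qed

lemma eventually_ln_le_powr_of_entire_order:
  assumes hol: "h holomorphic_on UNIV" and order: "entire_order h < ereal \<sigma>"
    and real: "\<And>r. r > 0 \<Longrightarrow> h (of_real r) = of_real (F r)"
    and pos: "\<And>r. r > 0 \<Longrightarrow> F r > 0"
  shows "\<forall>\<^sub>F r in at_top. ln (F r) \<le> r powr \<sigma>"
  using eventually_ln_max_modulus_le[OF order] eventually_gt_at_top[of 0]
proof eventually_elim
  case (elim r)
  have "F r = norm (h (of_real r))"
    using real[of r] pos[of r] elim by simp
  also have "\<dots> \<le> max_modulus h r"
    using elim holomorphic_on_imp_continuous_on[OF hol]
    by (intro norm_le_max_modulus) (auto intro: continuous_on_subset)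
  finally have "ln (F r) \<le> ln (max_modulus h r)"
    using pos[of r] elim by simp
  with elim show ?case
    by linarith
qed

section \<open>Cumulants\<close>

lemma powser_times_n_sums:
  fixes c :: "nat \<Rightarrow> 'a::{real_normed_field,banach}"
  assumes "\<And>z. (\<lambda>n. c n * z ^ n) sums F z"
  shows "(\<lambda>n. of_nat n * c n * z ^ n) sums (z * deriv F z)"
    and "(F has_field_derivative deriv F z) (at z)"
proof -
  have summable: "summable (\<lambda>n. c n * z ^ n)" for z
    using assms by (rule sums_summable)
  have F: "F = (\<lambda>z. \<Sum>n. c n * z ^ n)"
    using assms sums_unique by fastforce
  have "(F has_field_derivative (\<Sum>n. diffs c n * z ^ n)) (at z)"
    unfolding F by (rule termdiffs_strong_converges_everywhere[OF summable])
  then have deriv_F: "deriv F z = (\<Sum>n. diffs c n * z ^ n)"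
    by (rule DERIV_imp_deriv)
  with \<open>(F has_field_derivative _) _\<close> show "(F has_field_derivative deriv F z) (at z)"
    by simp
  have "(\<lambda>n. z * (diffs c n * z ^ n)) sums (z * deriv F z)"
    unfolding deriv_F
    by (intro sums_mult summable_sums termdiff_converges_all summable)
  then have "(\<lambda>n. of_nat (Suc n) * c (Suc n) * z ^ Suc n) sums (z * deriv F z)"
    by (simp add: diffs_def algebra_simps)
  then show "(\<lambda>n. of_nat n * c n * z ^ n) sums (z * deriv F z)"
    by (subst (asm) sums_Suc_iff) simp
qed

(* For f = exp (\<Sum> b_k z^k) this is the j-th cumulant of X_t. *)
definition cumulant :: "(nat \<Rightarrow> real) \<Rightarrow> nat \<Rightarrow> real \<Rightarrow> real" where
  "cumulant b j t = (\<Sum>k. real k ^ j * b k * t ^ k)"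

lemma term_le_suminf:
  fixes f :: "nat \<Rightarrow> real"
  assumes "summable f" and "\<And>n. f n \<ge> 0"
  shows "f k \<le> suminf f"
  using sum_le_suminf[OF assms(1), of "{k}"] assms(2) by simp

lemma cumulant_sums:
  assumes "\<And>x. summable (\<lambda>k. b k * x ^ k)"
  shows "(\<lambda>k. real k ^ j * b k * t ^ k) sums cumulant b j t"
proof (induction j arbitrary: t)
  case 0
  show ?case
    using assms by (simp add: cumulant_def summable_sums)
next
  case (Suc j)
  have "(\<lambda>k. of_nat k * (real k ^ j * b k) * t ^ k) sums (t * deriv (cumulant b j) t)"
    by (rule powser_times_n_sums(1)) (use Suc.IH in \<open>simp add: mult.assoc\<close>)
  then show ?case
    unfolding cumulant_def by (simp add: sums_iff mult.assoc)
qed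

lemma
  assumes "\<And>x. summable (\<lambda>k. b k * x ^ k)"
  shows cumulant_Suc: "cumulant b (Suc j) t = t * deriv (cumulant b j) t"
    and has_real_derivative_cumulant: "(cumulant b j has_real_derivative deriv (cumulant b j) t) (at t)"
proof -
  have sums: "(\<lambda>k. of_nat k * (real k ^ j * b k) * x ^ k) sums (x * deriv (cumulant b j) x)"
    and "(cumulant b j has_real_derivative deriv (cumulant b j) x) (at x)" for x
    using powser_times_n_sums[of "\<lambda>k. real k ^ j * b k" "cumulant b j"] cumulant_sums[OF assms]
    by (simp_all add: mult.assoc)
  then show "(cumulant b j has_real_derivative deriv (cumulant b j) t) (at t)"
    by blast
  from sums[of t] have "(\<lambda>k. real k ^ Suc j * b k * t ^ k) sums (t * deriv (cumulant b j) t)"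
    by (simp add: mult.assoc)
  then show "cumulant b (Suc j) t = t * deriv (cumulant b j) t"
    by (rule sums_unique2[OF cumulant_sums[OF assms]])
qed

lemma cumulant_term_le:
  assumes "\<And>k. b k \<ge> 0" and "\<And>x. summable (\<lambda>k. b k * x ^ k)" and "t \<ge> 0"
  shows "real k ^ j * b k * t ^ k \<le> cumulant b j t"
  unfolding cumulant_def
  by (rule term_le_suminf[OF sums_summable[OF cumulant_sums[OF assms(2)]]]) (use assms in simp)

lemma cumulant_nonneg:
  assumes "\<And>k. b k \<ge> 0" and "\<And>x. summable (\<lambda>k. b k * x ^ k)" and "t \<ge> 0"
  shows "cumulant b j t \<ge> 0"
  unfolding cumulant_def
  by (rule suminf_nonneg[OF sums_summable[OF cumulant_sums[OF assms(2)]]]) (use assms in simp)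

lemma cumulant_pos:
  assumes "\<And>k. b k \<ge> 0" and "\<And>x. summable (\<lambda>k. b k * x ^ k)"
    and "k > 0" and "b k > 0" and "t > 0"
  shows "cumulant b j t > 0"
proof -
  have "0 < real k ^ j * b k * t ^ k"
    using assms(3-) by simp
  also have "\<dots> \<le> cumulant b j t"
    using assms(5) by (intro cumulant_term_le[OF assms(1,2)]) simp
  finally show ?thesis .
qed

lemma filterlim_cumulant_at_top:
  assumes b: "\<And>k. b k \<ge> 0" and summable: "\<And>x. summable (\<lambda>k. b k * x ^ k)"
    and k: "k > 0" "b k > 0"
  shows "filterlim (cumulant b j) at_top at_top"
proof (rule filterlim_at_top_mono)
  show "filterlim (\<lambda>t. b k * t ^ k) at_top at_top"
    using k by (intro filterlim_tendsto_pos_mult_at_top[OF tendsto_const] filterlim_pow_at_top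
        filterlim_ident) auto
  show "\<forall>\<^sub>F t in at_top. b k * t ^ k \<le> cumulant b j t"
    using eventually_ge_at_top[of 0]
  proof eventually_elim
    case (elim t)
    have "1 \<le> real k ^ j"
      using k by (simp add: one_le_power)
    from mult_right_mono[OF this, of "b k * t ^ k"]
    have "b k * t ^ k \<le> real k ^ j * b k * t ^ k"
      using k elim by (simp add: mult.assoc)
    also have "\<dots> \<le> cumulant b j t"
      by (rule cumulant_term_le[OF b summable elim])
    finally show ?case .
  qed
qed

lemma eventually_powr_le_cumulant:
  assumes b: "\<And>k. b k \<ge> 0" and summable: "\<And>x. summable (\<lambda>k. b k * x ^ k)"
    and transcendental: "\<forall>D. \<exists>k>D. b k \<noteq> 0"
  shows "\<forall>\<^sub>F t in at_top. t powr p \<le> cumulant b j t"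
proof -
  obtain N where N: "N > nat \<lceil>p\<rceil> + 1" "b N \<noteq> 0"
    using transcendental by blast
  then have bN: "b N > 0" and p: "p \<le> real N - 1"
    using b[of N] by linarith+
  show ?thesis
    using eventually_ge_at_top[of "max 1 (1 / b N)"]
  proof eventually_elim
    case (elim t)
    then have t: "t \<ge> 1" and "b N * t \<ge> 1"
      using bN by (auto simp: field_simps)
    have "t powr p \<le> t powr (real N - 1)"
      using p t by (rule powr_mono)
    also have "\<dots> \<le> t powr (real N - 1) * (b N * t)"
      using \<open>b N * t \<ge> 1\<close> by (simp add: mult_le_cancel_left1)
    also have "\<dots> = b N * t ^ N"
      using t N by (simp add: powr_diff powr_realpow)
    also have "\<dots> \<le> real N ^ j * b N * t ^ N"
      using mult_right_mono[of 1 "real N ^ j" "b N * t ^ N"] N bN t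
      by (simp add: one_le_power mult.assoc)
    also have "\<dots> \<le> cumulant b j t"
      using t by (intro cumulant_term_le[OF b summable]) simp
    finally show ?case .
  qed
qed

lemma filterlim_cumulant_root_at_top:
  assumes "\<And>k. b k \<ge> 0" and "\<And>x. summable (\<lambda>k. b k * x ^ k)" and "k > 0" and "b k > 0"
  shows "filterlim (\<lambda>t. cumulant b j t powr (1/4)) at_top at_top"
proof (rule filterlim_compose[OF _ filterlim_cumulant_at_top[OF assms]])
  show "filterlim (\<lambda>x::real. x powr (1/4)) at_top at_top"
    by real_asymp
qed

section \<open>The tail of the second cumulant\<close>

lemma filterlim_powr_diff_at_bot:
  fixes C c \<sigma> :: real
  assumes "\<sigma> \<ge> 0" and "c > 0"
  shows "filterlim (\<lambda>t. C * t powr \<sigma> - c * t powr (\<sigma> + 1)) at_bot at_top"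
proof (rule filterlim_at_bot_mono)
  show "filterlim (\<lambda>t. C - c * t) at_bot at_top"
    using assms(2) by real_asymp
  show "\<forall>\<^sub>F t in at_top. C * t powr \<sigma> - c * t powr (\<sigma> + 1) \<le> C - c * t"
    using eventually_ge_at_top[of "max 1 (C / c)"]
  proof eventually_elim
    case (elim t)
    then have "C - c * t \<le> 0" and "1 \<le> t powr \<sigma>"
      using assms by (auto simp: field_simps ge_one_powr_ge_zero)
    then have "t powr \<sigma> * (C - c * t) \<le> C - c * t"
      using mult_right_mono_neg[of 1 "t powr \<sigma>" "C - c * t"] by simp
    then show ?case
      using elim by (simp add: powr_add algebra_simps)
  qed
qed

lemma real_square_le_four_power: "real k ^ 2 \<le> 4 ^ k"
proof -
  have "real k ^ 2 \<le> (2 ^ k) ^ 2"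
    using of_nat_less_two_power[of k] by (intro power_mono) simp_all
  also have "(2 ^ k) ^ 2 = (4::real) ^ k"
    by (simp add: power2_eq_square power_mult_distrib[symmetric])
  finally show ?thesis .
qed

definition cumulant_tail :: "(nat \<Rightarrow> real) \<Rightarrow> nat \<Rightarrow> real \<Rightarrow> real" where
  "cumulant_tail b K t = (\<Sum>k. if K < k then real k ^ 2 * b k * t ^ k else 0)"

lemma
  assumes "\<And>k. b k \<ge> 0" and "\<And>x. summable (\<lambda>k. b k * x ^ k)" and "t \<ge> 0"
  shows summable_cumulant_tail: "summable (\<lambda>k. if K < k then real k ^ 2 * b k * t ^ k else 0)"
    and cumulant_tail_nonneg: "cumulant_tail b K t \<ge> 0"
proof -
  show summable: "summable (\<lambda>k. if K < k then real k ^ 2 * b k * t ^ k else 0)"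
    by (rule summable_comparison_test[OF _ sums_summable[OF cumulant_sums[OF assms(2), of 2 t]]])
      (use assms in auto)
  show "cumulant_tail b K t \<ge> 0"
    unfolding cumulant_tail_def by (rule suminf_nonneg[OF summable]) (use assms in auto)
qed

lemma cumulant_tail_le:
  assumes b: "\<And>k. b k \<ge> 0" and summable: "\<And>x. summable (\<lambda>k. b k * x ^ k)" and t: "t \<ge> 0"
  shows "cumulant_tail b K t \<le> 2 * cumulant b 0 (16 * t) * (1/2) ^ K"
proof -
  define G where "G = cumulant b 0 (16 * t)"
  have G_ge: "b k * (16 * t) ^ k \<le> G" for k
    using cumulant_term_le[OF b summable, of "16 * t" k 0] t by (simp add: G_def)
  have "G \<ge> 0"
    unfolding G_def using t by (intro cumulant_nonneg[OF b summable]) simp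
  have term_le: "(if K < k then real k ^ 2 * b k * t ^ k else 0) \<le> G * (1/2) ^ K * (1/2) ^ k" for k
  proof (cases "K < k")
    case True
    have "real k ^ 2 * b k * t ^ k \<le> 4 ^ k * b k * t ^ k"
      using b t by (intro mult_right_mono real_square_le_four_power) auto
    also have "\<dots> = b k * (16 * t) ^ k * (1/2) ^ k * (1/2) ^ k"
    proof -
      have "(16::real) ^ k * (1/2) ^ k * (1/2) ^ k = 4 ^ k"
        by (simp flip: power_mult_distrib)
      then show ?thesis
        by (simp add: power_mult_distrib mult_ac)
    qed
    also have "\<dots> \<le> G * (1/2) ^ K * (1/2) ^ k"
      using True \<open>G \<ge> 0\<close> G_ge by (intro mult_right_mono mult_mono power_decreasing) auto
    finally show ?thesis
      using True by simp
  qed (use \<open>G \<ge> 0\<close> in simp)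
  have "cumulant_tail b K t \<le> (\<Sum>k. G * (1/2) ^ K * (1/2) ^ k)"
    unfolding cumulant_tail_def using summable_cumulant_tail[OF b summable t]
    by (intro suminf_le term_le summable_mult summable_geometric) auto
  also have "\<dots> = 2 * G * (1/2) ^ K"
    by (simp add: suminf_mult suminf_geometric summable_geometric)
  finally show ?thesis
    by (simp add: G_def)
qed

lemma half_power_le_exp:
  assumes "x \<le> real K + 1"
  shows "(1/2::real) ^ K \<le> 2 * exp (- ln 2 * x)"
proof -
  have "(1/2::real) ^ K = (1/2) powr real K"
    by (simp add: powr_realpow)
  also have "\<dots> \<le> (1/2) powr (x - 1)"
    using assms by (intro powr_mono') auto
  also have "\<dots> = exp ((x - 1) * ln (1/2))"
    by (simp add: powr_def)
  also have "\<dots> = exp (ln 2 + - ln 2 * x)"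
    by (simp add: ln_div algebra_simps)
  also have "\<dots> = 2 * exp (- ln 2 * x)"
    by (subst exp_add) simp
  finally show ?thesis .
qed

(* The growth bound makes \<kappa>_0(16t) \<le> exp ((16t)^\<sigma>), which the factor 2^(-K) of
   cumulant_tail_le beats. *)
lemma cumulant_tail_tendsto_zero_finite_order:
  assumes b: "\<And>k. b k \<ge> 0" and summable: "\<And>x. summable (\<lambda>k. b k * x ^ k)" and "\<sigma> \<ge> 0"
    and growth: "\<forall>\<^sub>F r in at_top. ln (cumulant b 0 r) \<le> r powr \<sigma>"
    and cutoff: "\<forall>\<^sub>F t in at_top. t powr (\<sigma> + 1) \<le> real (K t) + 1"
  shows "((\<lambda>t. cumulant_tail b (K t) t) \<longlongrightarrow> 0) at_top"
proof (rule tendsto_sandwich)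
  have "filterlim (\<lambda>t::real. 16 * t) at_top at_top"
    by real_asymp
  from filterlim_iff[THEN iffD1, OF this, rule_format, OF growth]
  have growth16: "\<forall>\<^sub>F t in at_top. ln (cumulant b 0 (16 * t)) \<le> (16 * t) powr \<sigma>"
    by simp
  show "\<forall>\<^sub>F t in at_top.
      cumulant_tail b (K t) t \<le> 4 * exp (16 powr \<sigma> * t powr \<sigma> - ln 2 * t powr (\<sigma> + 1))"
    using growth16 cutoff eventually_ge_at_top[of 1]
  proof eventually_elim
    case (elim t)
    have growth_le: "cumulant b 0 (16 * t) \<le> exp ((16 * t) powr \<sigma>)"
    proof (cases "cumulant b 0 (16 * t) > 0")
      case True
      then have "cumulant b 0 (16 * t) = exp (ln (cumulant b 0 (16 * t)))"
        by simp
      also have "\<dots> \<le> exp ((16 * t) powr \<sigma>)"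
        using elim by simp
      finally show ?thesis .
    qed (simp add: order_trans[OF _ less_imp_le[OF exp_gt_zero]])
    have "cumulant_tail b (K t) t \<le> 2 * cumulant b 0 (16 * t) * (1/2) ^ K t"
      using elim by (intro cumulant_tail_le[OF b summable]) simp
    also have "\<dots> \<le> 2 * exp ((16 * t) powr \<sigma>) * (2 * exp (- ln 2 * t powr (\<sigma> + 1)))"
      using growth_le half_power_le_exp[OF elim(2)] elim
      by (intro mult_mono mult_left_mono cumulant_nonneg[OF b summable]) auto
    also have "\<dots> = 4 * exp (16 powr \<sigma> * t powr \<sigma> - ln 2 * t powr (\<sigma> + 1))"
      using elim by (simp add: powr_mult flip: exp_add)
    finally show ?case .
  qed
  show "\<forall>\<^sub>F t in at_top. 0 \<le> cumulant_tail b (K t) t"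
    using eventually_ge_at_top[of 0] by eventually_elim (rule cumulant_tail_nonneg[OF b summable])
  show "((\<lambda>t. 4 * exp (16 powr \<sigma> * t powr \<sigma> - ln 2 * t powr (\<sigma> + 1))) \<longlongrightarrow> 0) at_top"
    by (intro tendsto_mult_right_zero filterlim_compose[OF exp_at_bot]
        filterlim_powr_diff_at_bot \<open>\<sigma> \<ge> 0\<close>) simp
qed (rule tendsto_const)

lemma cumulant_tail_eventually_zero:
  assumes "\<And>k. D < k \<Longrightarrow> b k = 0" and "\<forall>\<^sub>F t in F. D \<le> K t"
  shows "\<forall>\<^sub>F t in F. cumulant_tail b (K t) t = 0"
  using assms(2)
proof eventually_elim
  case (elim t)
  then have "(\<lambda>k. if K t < k then real k ^ 2 * b k * t ^ k else 0) = (\<lambda>k. 0)"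
    using assms(1) by auto
  then show ?case
    by (simp add: cumulant_tail_def)
qed

lemma le_nat_floor_plus_one: "x \<ge> 0 \<Longrightarrow> x \<le> real (nat \<lfloor>x\<rfloor>) + 1"
  by linarith

(* For transcendental g the variance outgrows every power of t, so its fourth root eventually
   exceeds t^(\<sigma>+1); for polynomial g the tail is eventually empty. *)
lemma cumulant_tail_tendsto_zero:
  assumes b: "\<And>k. b k \<ge> 0" and summable: "\<And>x. summable (\<lambda>k. b k * x ^ k)"
    and k: "k > 0" "b k > 0" and "\<sigma> \<ge> 0"
    and growth: "\<forall>\<^sub>F r in at_top. ln (cumulant b 0 r) \<le> r powr \<sigma>"
  shows "((\<lambda>t. cumulant_tail b (nat \<lfloor>cumulant b 2 t powr (1/4)\<rfloor>) t) \<longlongrightarrow> 0) at_top"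
proof (cases "\<forall>D. \<exists>k>D. b k \<noteq> 0")
  case True
  have "\<forall>\<^sub>F t in at_top. t powr (\<sigma> + 1) \<le> real (nat \<lfloor>cumulant b 2 t powr (1/4)\<rfloor>) + 1"
    using eventually_powr_le_cumulant[OF b summable True, of "4 * (\<sigma> + 1)" 2]
      eventually_ge_at_top[of 0]
  proof eventually_elim
    case (elim t)
    have "t powr (\<sigma> + 1) = (t powr (4 * (\<sigma> + 1))) powr (1/4)"
      by (simp add: powr_powr add_divide_distrib)
    also have "\<dots> \<le> cumulant b 2 t powr (1/4)"
      using elim by (intro powr_mono2) auto
    also have "\<dots> \<le> real (nat \<lfloor>cumulant b 2 t powr (1/4)\<rfloor>) + 1"
      by (intro le_nat_floor_plus_one) simp
    finally show ?case .
  qed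
  then show ?thesis
    by (rule cumulant_tail_tendsto_zero_finite_order[OF b summable \<open>\<sigma> \<ge> 0\<close> growth])
next
  case False
  then obtain D where "\<And>k. D < k \<Longrightarrow> b k = 0"
    by auto
  moreover have "\<forall>\<^sub>F t in at_top. real D \<le> cumulant b 2 t powr (1/4)"
    using filterlim_cumulant_root_at_top[OF b summable k, of 2] by (simp add: filterlim_at_top)
  then have "\<forall>\<^sub>F t in at_top. D \<le> nat \<lfloor>cumulant b 2 t powr (1/4)\<rfloor>"
    by eventually_elim (rule le_nat_floor)
  ultimately show ?thesis
    by (intro tendsto_eventually cumulant_tail_eventually_zero)
qed

section \<open>The remainder in the characteristic function\<close>

definition iexp_remainder :: "real \<Rightarrow> complex" where
  "iexp_remainder x = iexp x - (1 + \<i> * x - x\<^sup>2 / 2)"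

lemma norm_iexp_remainder_le:
  shows "norm (iexp_remainder x) \<le> \<bar>x\<bar> ^ 3 / 6"
    and "norm (iexp_remainder x) \<le> x\<^sup>2"
proof -
  have taylor2: "(\<Sum>i\<le>2. (\<i> * complex_of_real x) ^ i / fact i) = 1 + \<i> * x - x\<^sup>2 / 2"
    by (simp add: numeral_2_eq_2 power2_eq_square algebra_simps)
  show "norm (iexp_remainder x) \<le> \<bar>x\<bar> ^ 3 / 6"
    using iexp_approx1[of x 2] by (simp add: iexp_remainder_def taylor2 numeral_3_eq_3 fact_numeral)
  show "norm (iexp_remainder x) \<le> x\<^sup>2"
    using iexp_approx2[of x 2] by (simp add: iexp_remainder_def taylor2)
qed

(* The cubic bound below the cutoff K, the quadratic one above it. *)
lemma norm_iexp_remainder_le_cutoff: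
  "norm (iexp_remainder (real k * u))
     \<le> real k ^ 2 * u\<^sup>2 * (real K * \<bar>u\<bar> / 6) + u\<^sup>2 * (if K < k then real k ^ 2 else 0)"
proof (cases "K < k")
  case True
  have "norm (iexp_remainder (real k * u)) \<le> u\<^sup>2 * real k ^ 2"
    using norm_iexp_remainder_le(2)[of "real k * u"] by (simp add: power_mult_distrib mult.commute)
  then show ?thesis
    using True by (intro add_increasing) simp_all
next
  case False
  have "\<bar>real k * u\<bar> ^ 3 / 6 = real k ^ 2 * u\<^sup>2 * (real k * \<bar>u\<bar> / 6)"
    by (simp add: abs_mult power_mult_distrib power2_eq_square power3_eq_cube)
  also have "\<dots> \<le> real k ^ 2 * u\<^sup>2 * (real K * \<bar>u\<bar> / 6)"
    using False by (intro mult_left_mono divide_right_mono mult_right_mono) auto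
  finally show ?thesis
    using False norm_iexp_remainder_le(1)[of "real k * u"] by simp
qed

definition cumulant_remainder :: "(nat \<Rightarrow> real) \<Rightarrow> real \<Rightarrow> real \<Rightarrow> complex" where
  "cumulant_remainder b \<theta> t =
     (\<Sum>k. of_real (b k * t ^ k) * iexp_remainder (real k * (\<theta> / sqrt (cumulant b 2 t))))"

lemma norm_cumulant_remainder_le:
  assumes b: "\<And>k. b k \<ge> 0" and summable: "\<And>x. summable (\<lambda>k. b k * x ^ k)"
    and t: "t \<ge> 0" and pos: "cumulant b 2 t > 0"
  shows "norm (cumulant_remainder b \<theta> t)
    \<le> \<theta>\<^sup>2 * \<bar>\<theta>\<bar> / 6 * (real K / sqrt (cumulant b 2 t)) + \<theta>\<^sup>2 * (cumulant_tail b K t / cumulant b 2 t)"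
proof -
  define u where "u = \<theta> / sqrt (cumulant b 2 t)"
  define bound where "bound k = real k ^ 2 * b k * t ^ k * (u\<^sup>2 * (real K * \<bar>u\<bar> / 6))
    + u\<^sup>2 * (if K < k then real k ^ 2 * b k * t ^ k else 0)" for k
  have term_le: "norm (of_real (b k * t ^ k) * iexp_remainder (real k * u)) \<le> bound k" for k
  proof -
    have "norm (of_real (b k * t ^ k) * iexp_remainder (real k * u))
        = b k * t ^ k * norm (iexp_remainder (real k * u))"
      using b[of k] t by (simp add: norm_mult norm_power)
    also have "\<dots> \<le> b k * t ^ k * (real k ^ 2 * u\<^sup>2 * (real K * \<bar>u\<bar> / 6)
        + u\<^sup>2 * (if K < k then real k ^ 2 else 0))"
      using b[of k] t by (intro mult_left_mono norm_iexp_remainder_le_cutoff) auto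
    also have "\<dots> = bound k"
      by (simp add: bound_def algebra_simps)
    finally show ?thesis .
  qed
  have cumulant: "(\<lambda>k. real k ^ 2 * b k * t ^ k) sums cumulant b 2 t"
    by (rule cumulant_sums[OF summable])
  have tail: "(\<lambda>k. if K < k then real k ^ 2 * b k * t ^ k else 0) sums cumulant_tail b K t"
    unfolding cumulant_tail_def using summable_cumulant_tail[OF b summable t] by (rule summable_sums)
  have "bound sums (cumulant b 2 t * (u\<^sup>2 * (real K * \<bar>u\<bar> / 6)) + u\<^sup>2 * cumulant_tail b K t)"
    unfolding bound_def by (intro sums_add sums_mult sums_mult2 cumulant tail)
  moreover have "cumulant b 2 t * (u\<^sup>2 * (real K * \<bar>u\<bar> / 6)) + u\<^sup>2 * cumulant_tail b K t
      = \<theta>\<^sup>2 * \<bar>\<theta>\<bar> / 6 * (real K / sqrt (cumulant b 2 t)) + \<theta>\<^sup>2 * (cumulant_tail b K t / cumulant b 2 t)"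
  proof -
    have u2: "u\<^sup>2 = \<theta>\<^sup>2 / cumulant b 2 t" and abs_u: "\<bar>u\<bar> = \<bar>\<theta>\<bar> / sqrt (cumulant b 2 t)"
      using pos by (simp_all add: u_def power_divide abs_divide)
    show ?thesis
      unfolding u2 abs_u using pos by (simp add: field_simps)
  qed
  ultimately have "bound sums (\<theta>\<^sup>2 * \<bar>\<theta>\<bar> / 6 * (real K / sqrt (cumulant b 2 t))
      + \<theta>\<^sup>2 * (cumulant_tail b K t / cumulant b 2 t))"
    by simp
  then show ?thesis
    unfolding cumulant_remainder_def u_def[symmetric]
    using norm_suminf_le[OF term_le sums_summable] sums_unique by fastforce
qed

lemma cumulant_remainder_tendsto_zero:
  assumes b: "\<And>k. b k \<ge> 0" and summable: "\<And>x. summable (\<lambda>k. b k * x ^ k)"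
    and k: "k > 0" "b k > 0"
    and tail: "((\<lambda>t. cumulant_tail b (nat \<lfloor>cumulant b 2 t powr (1/4)\<rfloor>) t) \<longlongrightarrow> 0) at_top"
  shows "(cumulant_remainder b \<theta> \<longlongrightarrow> 0) at_top"
proof (rule Lim_null_comparison)
  define K where "K t = nat \<lfloor>cumulant b 2 t powr (1/4)\<rfloor>" for t
  have top: "filterlim (cumulant b 2) at_top at_top"
    by (rule filterlim_cumulant_at_top[OF b summable k])
  have pos: "cumulant b 2 t > 0" if "t > 0" for t
    by (rule cumulant_pos[OF b summable k that])
  show "\<forall>\<^sub>F t in at_top. norm (cumulant_remainder b \<theta> t)
      \<le> \<theta>\<^sup>2 * \<bar>\<theta>\<bar> / 6 * (real (K t) / sqrt (cumulant b 2 t))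
        + \<theta>\<^sup>2 * (cumulant_tail b (K t) t / cumulant b 2 t)"
    using eventually_gt_at_top[of 0]
    by eventually_elim (rule norm_cumulant_remainder_le[OF b summable _ pos], simp_all)
  have "((\<lambda>x::real. x powr (1/4) / sqrt x) \<longlongrightarrow> 0) at_top"
    by real_asymp
  then have root: "((\<lambda>t. cumulant b 2 t powr (1/4) / sqrt (cumulant b 2 t)) \<longlongrightarrow> 0) at_top"
    by (rule filterlim_compose[OF _ top])
  have "((\<lambda>t. real (K t) / sqrt (cumulant b 2 t)) \<longlongrightarrow> 0) at_top"
  proof (rule tendsto_sandwich[OF _ _ tendsto_const root])
    show "\<forall>\<^sub>F t in at_top. real (K t) / sqrt (cumulant b 2 t)
        \<le> cumulant b 2 t powr (1/4) / sqrt (cumulant b 2 t)"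
      using eventually_gt_at_top[of 0]
      by eventually_elim (use pos in \<open>auto simp: K_def less_imp_le intro!: divide_right_mono\<close>)
    show "\<forall>\<^sub>F t in at_top. 0 \<le> real (K t) / sqrt (cumulant b 2 t)"
      using eventually_gt_at_top[of 0] by eventually_elim (use pos in \<open>simp add: less_imp_le\<close>)
  qed
  moreover have "((\<lambda>t. cumulant_tail b (K t) t / cumulant b 2 t) \<longlongrightarrow> 0) at_top"
    using tail unfolding K_def[symmetric]
    by (rule tendsto_divide_0[OF _ filterlim_at_top_imp_at_infinity[OF top]])
  ultimately have "((\<lambda>t. \<theta>\<^sup>2 * \<bar>\<theta>\<bar> / 6 * (real (K t) / sqrt (cumulant b 2 t))
      + \<theta>\<^sup>2 * (cumulant_tail b (K t) t / cumulant b 2 t)) \<longlongrightarrow> \<theta>\<^sup>2 * \<bar>\<theta>\<bar> / 6 * 0 + \<theta>\<^sup>2 * 0) at_top"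
    by (intro tendsto_intros)
  then show "((\<lambda>t. \<theta>\<^sup>2 * \<bar>\<theta>\<bar> / 6 * (real (K t) / sqrt (cumulant b 2 t))
      + \<theta>\<^sup>2 * (cumulant_tail b (K t) t / cumulant b 2 t)) \<longlongrightarrow> 0) at_top"
    by simp
qed

lemma iexp_remainder_expand:
  "of_real p * iexp_remainder (real k * u)
    = of_real p * iexp (real k * u) - of_real p - \<i> * of_real u * of_real (real k * p)
      + of_real (u\<^sup>2 / 2) * of_real (real k ^ 2 * p)"
proof -
  define X where "X = iexp (real k * u)"
  show ?thesis
    unfolding iexp_remainder_def X_def[symmetric] by (simp add: algebra_simps power2_eq_square)
qed

lemma power_of_real_mult_iexp:
  "(of_real t * iexp u) ^ k = of_real (t ^ k) * iexp (real k * u)"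
proof -
  have "iexp (real k * u) = exp (of_nat k * (\<i> * of_real u))"
    by (simp only: of_real_mult of_real_of_nat_eq mult.left_commute)
  also have "\<dots> = iexp u ^ k"
    by (rule exp_of_nat_mult)
  finally show ?thesis
    by (simp only: power_mult_distrib of_real_power)
qed

section \<open>Exponentials of power series with nonnegative coefficients\<close>

locale exp_powser =
  fixes a b :: "nat \<Rightarrow> real"
  assumes a_nonneg: "\<And>n. a n \<ge> 0" and b_nonneg: "\<And>k. b k \<ge> 0"
    and summable_b: "\<And>x. summable (\<lambda>k. b k * x ^ k)"
    and exp_sums: "\<And>z::complex. (\<lambda>n. of_real (a n) * z ^ n) sums exp (\<Sum>k. of_real (b k) * z ^ k)"
begin

definition g_series :: "complex \<Rightarrow> complex" where
  "g_series z = (\<Sum>k. of_real (b k) * z ^ k)"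

lemma g_series_sums: "(\<lambda>k. of_real (b k) * z ^ k) sums g_series z"
proof -
  have "summable (\<lambda>k. norm (of_real (b k) * z ^ k))"
    using summable_b[of "norm z"] b_nonneg by (simp add: norm_mult norm_power)
  then show ?thesis
    unfolding g_series_def by (rule summable_sums[OF summable_norm_cancel])
qed

lemma g_series_of_real: "g_series (of_real x) = of_real (cumulant b 0 x)"
proof -
  have "(\<lambda>k. of_real (b k) * of_real x ^ k) sums (of_real (cumulant b 0 x) :: complex)"
    using sums_of_real[OF cumulant_sums[OF summable_b, of 0 x]] by simp
  then show ?thesis
    by (rule sums_unique2[OF g_series_sums])
qed

lemma cumulant_0_sums: "(\<lambda>k. b k * x ^ k) sums cumulant b 0 x"
  using cumulant_sums[OF summable_b, of 0 x] by simp

lemma cumulant_1_sums: "(\<lambda>k. real k * b k * x ^ k) sums cumulant b 1 x"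
  using cumulant_sums[OF summable_b, of 1 x] by simp

lemma exp_sums_real: "(\<lambda>n. a n * x ^ n) sums exp (cumulant b 0 x)"
proof -
  from exp_sums[of "of_real x", folded g_series_def]
  have "(\<lambda>n. of_real (a n * x ^ n)) sums (of_real (exp (cumulant b 0 x)) :: complex)"
    by (simp add: g_series_of_real exp_of_real)
  then show ?thesis
    by (simp only: sums_of_real_iff)
qed

lemma ps_val_eq: "ps_val a x = exp (cumulant b 0 x)"
  unfolding ps_val_def using exp_sums_real by (rule sums_unique[symmetric])

lemma cumulant_1_eq_deriv: "cumulant b 1 x = x * deriv (cumulant b 0) x"
  using cumulant_Suc[OF summable_b, of 0] by (simp add: One_nat_def)

lemma cumulant_2_eq_deriv: "cumulant b 2 x = x * deriv (cumulant b 1) x"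
  using cumulant_Suc[OF summable_b, of 1] by (simp add: numeral_2_eq_2)

lemma exp_moment1_sums: "(\<lambda>n. real n * a n * x ^ n) sums (cumulant b 1 x * exp (cumulant b 0 x))"
proof -
  have "deriv (\<lambda>y. exp (cumulant b 0 y)) x = exp (cumulant b 0 x) * deriv (cumulant b 0) x"
    by (rule DERIV_imp_deriv)
      (auto intro!: derivative_eq_intros has_real_derivative_cumulant[OF summable_b])
  then have "x * deriv (\<lambda>y. exp (cumulant b 0 y)) x = cumulant b 1 x * exp (cumulant b 0 x)"
    unfolding cumulant_1_eq_deriv by (simp add: mult_ac)
  then show ?thesis
    using powser_times_n_sums(1)[OF exp_sums_real, of x] by simp
qed

lemma exp_moment2_sums:
  "(\<lambda>n. real n ^ 2 * a n * x ^ n) sums ((cumulant b 2 x + (cumulant b 1 x)\<^sup>2) * exp (cumulant b 0 x))"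
proof -
  have "deriv (\<lambda>y. cumulant b 1 y * exp (cumulant b 0 y)) x
      = deriv (cumulant b 1) x * exp (cumulant b 0 x)
        + cumulant b 1 x * (exp (cumulant b 0 x) * deriv (cumulant b 0) x)"
    by (rule DERIV_imp_deriv)
      (auto intro!: derivative_eq_intros has_real_derivative_cumulant[OF summable_b])
  then have "x * deriv (\<lambda>y. cumulant b 1 y * exp (cumulant b 0 y)) x
      = (cumulant b 2 x + (cumulant b 1 x)\<^sup>2) * exp (cumulant b 0 x)"
    unfolding cumulant_2_eq_deriv cumulant_1_eq_deriv by (simp add: power2_eq_square algebra_simps)
  then show ?thesis
    using powser_times_n_sums(1)[of "\<lambda>n. real n * a n", OF exp_moment1_sums, of x]
    by (simp add: power2_eq_square mult.assoc)
qed

lemma ps_mean_eq: "ps_mean a x = cumulant b 1 x"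
  unfolding ps_mean_def ps_val_eq using sums_unique[OF exp_moment1_sums, symmetric] by simp

lemma ps_sigma_eq: "ps_sigma a x = sqrt (cumulant b 2 x)"
proof -
  let ?m = "cumulant b 1 x" and ?E = "exp (cumulant b 0 x)"
  have "(\<lambda>n. real n ^ 2 * a n * x ^ n - 2 * ?m * (real n * a n * x ^ n) + ?m\<^sup>2 * (a n * x ^ n))
      sums ((cumulant b 2 x + ?m\<^sup>2) * ?E - 2 * ?m * (?m * ?E) + ?m\<^sup>2 * ?E)"
    by (intro sums_add sums_diff sums_mult exp_moment1_sums exp_moment2_sums exp_sums_real)
  then have "(\<lambda>n. (real n - ?m)\<^sup>2 * a n * x ^ n) sums (cumulant b 2 x * ?E)"
    by (simp add: power2_eq_square algebra_simps)
  then show ?thesis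
    unfolding ps_sigma_def ps_mean_eq ps_val_eq by (simp add: sums_iff)
qed

lemma cumulant_remainder_eq:
  fixes \<theta> t :: real
  assumes "cumulant b 2 t > 0"
  defines "u \<equiv> \<theta> / sqrt (cumulant b 2 t)"
  shows "cumulant_remainder b \<theta> t = g_series (of_real t * iexp u) - g_series (of_real t)
    - \<i> * of_real u * of_real (cumulant b 1 t) + of_real (\<theta>\<^sup>2 / 2)"
proof -
  have "(\<lambda>k. of_real (b k) * (of_real t * iexp u) ^ k - of_real (b k * t ^ k)
      - \<i> * of_real u * of_real (real k * (b k * t ^ k))
      + of_real (u\<^sup>2 / 2) * of_real (real k ^ 2 * (b k * t ^ k)))
    sums (g_series (of_real t * iexp u) - g_series (of_real t) - \<i> * of_real u * of_real (cumulant b 1 t)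
      + of_real (u\<^sup>2 / 2) * of_real (cumulant b 2 t))"
    unfolding g_series_of_real mult.assoc[symmetric]
    by (intro sums_add sums_diff sums_mult g_series_sums sums_of_real cumulant_sums[OF summable_b]
        cumulant_0_sums cumulant_1_sums)
  moreover have "of_real (b k) * (of_real t * iexp u) ^ k = of_real (b k * t ^ k) * iexp (real k * u)" for k
    by (simp add: power_of_real_mult_iexp mult.assoc)
  moreover have "of_real (u\<^sup>2 / 2) * of_real (cumulant b 2 t) = (of_real (\<theta>\<^sup>2 / 2) :: complex)"
    using assms by (simp add: power_divide)
  ultimately have "(\<lambda>k. of_real (b k * t ^ k) * iexp_remainder (real k * u))
      sums (g_series (of_real t * iexp u) - g_series (of_real t) - \<i> * of_real u * of_real (cumulant b 1 t)
        + of_real (\<theta>\<^sup>2 / 2))"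
    unfolding iexp_remainder_expand by simp
  then show ?thesis
    unfolding cumulant_remainder_def u_def by (simp add: sums_iff)
qed

lemma char_ps_normalized_distr:
  assumes t: "t > 0" and pos: "cumulant b 2 t > 0"
  shows "char (ps_normalized_distr a t) \<theta> = exp (cumulant_remainder b \<theta> t - of_real (\<theta>\<^sup>2 / 2))"
proof -
  define m where "m = cumulant b 1 t"
  define u where "u = \<theta> / sqrt (cumulant b 2 t)"
  define z where "z = of_real t * iexp u"
  have weights: "(\<lambda>n. a n * t ^ n / ps_val a t) sums 1"
    using sums_divide[OF exp_sums_real, of t "exp (cumulant b 0 t)"] by (simp add: ps_val_eq)
  have "char (ps_normalized_distr a t) \<theta>
      = (\<Sum>n. of_real (a n * t ^ n / ps_val a t) * iexp (\<theta> * ((real n - m) / sqrt (cumulant b 2 t))))"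
    unfolding ps_normalized_distr_def ps_mean_eq ps_sigma_eq m_def
    by (rule char_discrete_distr[OF _ weights]) (use a_nonneg t in \<open>simp add: ps_val_eq\<close>)
  also have "\<dots> = (\<Sum>n. of_real (a n) * z ^ n * (iexp (- (m * u)) / exp (g_series (of_real t))))"
  proof (intro suminf_cong)
    fix n
    have "\<theta> * ((real n - m) / sqrt (cumulant b 2 t)) = real n * u + - (m * u)"
      by (simp add: u_def diff_divide_distrib algebra_simps)
    then have "iexp (\<theta> * ((real n - m) / sqrt (cumulant b 2 t))) = iexp (real n * u) * iexp (- (m * u))"
      by (simp only: of_real_add distrib_left exp_add)
    then show "of_real (a n * t ^ n / ps_val a t) * iexp (\<theta> * ((real n - m) / sqrt (cumulant b 2 t)))
        = of_real (a n) * z ^ n * (iexp (- (m * u)) / exp (g_series (of_real t)))"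
      by (simp add: z_def power_of_real_mult_iexp ps_val_eq g_series_of_real exp_of_real)
  qed
  also have "\<dots> = exp (g_series z) * (iexp (- (m * u)) / exp (g_series (of_real t)))"
    using sums_mult2[OF exp_sums[of z, folded g_series_def]] by (rule sums_unique[symmetric])
  also have "\<dots> = exp (g_series z) * exp (- (\<i> * of_real u * of_real m)) / exp (g_series (of_real t))"
    by (simp add: mult_ac)
  also have "\<dots> = exp (g_series z + - (\<i> * of_real u * of_real m) - g_series (of_real t))"
    by (simp only: exp_diff exp_add)
  also have "\<dots> = exp (cumulant_remainder b \<theta> t - of_real (\<theta>\<^sup>2 / 2))"
    unfolding cumulant_remainder_eq[OF pos] z_def u_def m_def by (simp add: algebra_simps)
  finally show ?thesis .
qed

theorem gaussian_if_finite_order: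
  assumes "k > 0" and "b k > 0" and "\<sigma> \<ge> 0"
    and growth: "\<forall>\<^sub>F r in at_top. ln (cumulant b 0 r) \<le> r powr \<sigma>"
  shows "gaussian a"
proof (rule gaussianI_char[OF a_nonneg])
  show "summable (\<lambda>n. a n * t ^ n)" for t
    using exp_sums_real by (rule sums_summable)
  show "ps_val a t > 0" for t
    by (simp add: ps_val_eq)
  fix \<theta>
  have "((\<lambda>t. exp (cumulant_remainder b \<theta> t - of_real (\<theta>\<^sup>2 / 2))) \<longlongrightarrow> exp (0 - of_real (\<theta>\<^sup>2 / 2))) at_top"
    using cumulant_remainder_tendsto_zero[OF b_nonneg summable_b assms(1,2)
        cumulant_tail_tendsto_zero[OF b_nonneg summable_b assms]]
    by (intro tendsto_intros)
  moreover have "\<forall>\<^sub>F t in at_top. exp (cumulant_remainder b \<theta> t - of_real (\<theta>\<^sup>2 / 2))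
      = char (ps_normalized_distr a t) \<theta>"
    using eventually_gt_at_top[of 0]
    by eventually_elim
      (simp add: char_ps_normalized_distr cumulant_pos[OF b_nonneg summable_b assms(1,2)])
  moreover have "char std_normal_distribution \<theta> = exp (0 - of_real (\<theta>\<^sup>2 / 2))"
    unfolding char_std_normal_distribution by (subst exp_of_real[symmetric]) simp
  ultimately show "((\<lambda>t. char (ps_normalized_distr a t) \<theta>) \<longlongrightarrow> char std_normal_distribution \<theta>) at_top"
    by (simp only:) (rule Lim_transform_eventually)
qed

end

lemma exp_powser_of_entire:
  assumes entire: "g holomorphic_on UNIV" and nonneg: "\<And>n. taylor_coeff g n \<in> \<real>\<^sub>\<ge>\<^sub>0"
  shows "exp_powser (\<lambda>n. Re (taylor_coeff (\<lambda>z. exp (g z)) n)) (\<lambda>k. Re (taylor_coeff g k))"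
proof
  have entire_exp: "(\<lambda>z. exp (g z)) holomorphic_on UNIV"
    using entire by (intro holomorphic_intros)
  have exp_nonneg: "taylor_coeff (\<lambda>z. exp (g z)) n \<in> \<real>\<^sub>\<ge>\<^sub>0" for n
    by (rule taylor_coeff_exp_nonneg_Reals[OF entire nonneg])
  note g_sums = taylor_coeff_sums_Re[OF entire nonneg]
  show "Re (taylor_coeff (\<lambda>z. exp (g z)) n) \<ge> 0" for n
    using exp_nonneg[of n] by (simp add: complex_nonneg_Reals_iff)
  show "Re (taylor_coeff g k) \<ge> 0" for k
    using nonneg[of k] by (simp add: complex_nonneg_Reals_iff)
  show "summable (\<lambda>k. Re (taylor_coeff g k) * x ^ k)" for x
    using sums_summable[OF sums_Re[OF g_sums[of "of_real x"]]] by simp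
  show "(\<lambda>n. of_real (Re (taylor_coeff (\<lambda>z. exp (g z)) n)) * z ^ n)
      sums exp (\<Sum>k. of_real (Re (taylor_coeff g k)) * z ^ k)" for z :: complex
    using taylor_coeff_sums_Re[OF entire_exp exp_nonneg, of z] sums_unique[OF g_sums[of z]] by simp
qed

lemma eventually_ln_cumulant_le_powr:
  assumes entire: "g holomorphic_on UNIV" and nonneg: "\<And>n. taylor_coeff g n \<in> \<real>\<^sub>\<ge>\<^sub>0"
    and order: "entire_order g < ereal \<sigma>"
    and k: "k > 0" "Re (taylor_coeff g k) > 0"
  shows "\<forall>\<^sub>F r in at_top. ln (cumulant (\<lambda>k. Re (taylor_coeff g k)) 0 r) \<le> r powr \<sigma>"
proof (rule eventually_ln_le_powr_of_entire_order[OF entire order])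
  interpret exp_powser "\<lambda>n. Re (taylor_coeff (\<lambda>z. exp (g z)) n)" "\<lambda>k. Re (taylor_coeff g k)"
    by (rule exp_powser_of_entire[OF entire nonneg])
  show "g (of_real r) = of_real (cumulant (\<lambda>k. Re (taylor_coeff g k)) 0 r)" for r
    using g_series_of_real sums_unique2[OF taylor_coeff_sums_Re[OF entire nonneg] g_series_sums]
    by simp
  show "cumulant (\<lambda>k. Re (taylor_coeff g k)) 0 r > 0" if "r > 0" for r
    by (rule cumulant_pos[OF b_nonneg summable_b k that])
qed

theorem corollary4p12:
  fixes g :: "complex \<Rightarrow> complex" and \<rho> :: real
  assumes entire: "g holomorphic_on UNIV"
    and nonconst: "\<not> (\<exists>c. \<forall>z. g z = c)"
    and order: "entire_order g = ereal \<rho>" and "\<rho> \<ge> 0"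
    and coeffs: "\<forall>n. Im (taylor_coeff g n) = 0 \<and> Re (taylor_coeff g n) \<ge> 0"
  shows "gaussian (\<lambda>n. Re (taylor_coeff (\<lambda>z. exp (g z)) n))"
proof -
  have nonneg: "taylor_coeff g n \<in> \<real>\<^sub>\<ge>\<^sub>0" for n
    using coeffs by (simp add: complex_nonneg_Reals_iff)
  interpret exp_powser "\<lambda>n. Re (taylor_coeff (\<lambda>z. exp (g z)) n)" "\<lambda>k. Re (taylor_coeff g k)"
    by (rule exp_powser_of_entire[OF entire nonneg])
  obtain k where k: "k > 0" "Re (taylor_coeff g k) > 0"
    using taylor_coeff_pos_if_nonconstant[OF entire nonneg nonconst] .
  have "\<forall>\<^sub>F r in at_top. ln (cumulant (\<lambda>k. Re (taylor_coeff g k)) 0 r) \<le> r powr (\<rho> + 1)"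
    by (rule eventually_ln_cumulant_le_powr[OF entire nonneg _ k]) (simp add: order)
  then show ?thesis
    by (rule gaussian_if_finite_order[OF k, rotated]) (simp add: \<open>\<rho> \<ge> 0\<close>)
qed

end
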